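(* Fix $a\in[0,1]$, $b\in\mathbb Z$, $x\in\mathbb R$, and let $m=\lfloor a\log_2 n\rfloor+b$ and $l=x\sqrt{\sigma_a^2\ln n}+\mu_a\ln n$. If $m\ge0$ (for all large $n$), then, with $N$ a standard Gaussian variable, \[\lim_{n\to\infty}\mathbb E\big[\widetilde G_{m,l}(|\mathcal S_n(1)|)\big]=\mathbb E\left[\Phi\left(\frac{\sqrt{2\sigma_a^2}\,x-N}{\sqrt{\mu_a}}\right)\right].\]
   Context: Kingman's $n$-coalescent $(F_n,\dots,F_1)$: forests on $[n]$; $F_n$ has no edges; for $2\le i\le n$, list the trees of $F_i$ as $T^{(i)}_1,\dots,T^{(i)}_i$ in increasing order of smallest label, choose $\{a_i,b_i\}$ uniformly among 2-subsets of $[i]$ and an independent fair bit $\xi_i$ (independent over $i$), and obtain $F_{i-1}$ by adding an edge between the roots of $T^{(i)}_{a_i},T^{(i)}_{b_i}$ directed towards one of them according to $\xi_i$. $T_i(v)$ is the tree of $F_i$ containing $v$, and $\mathcal S_n(v)=\{2\le i\le n:T_i(v)\in\{T^{(i)}_{a_i},T^{(i)}_{b_i}\}\}$ (so $|\mathcal S_n(v)|$ is a sum of independent Bernoulli$(2/i)$ variables, $2\le i\le n$). For integers $d$ and reals $l$, $\widetilde G_{d,l}(t)=\mathbb P(\mathrm{Bin}(t-d,1/2)<l)\mathbf 1\{t\ge d\}$ for $t\in\mathbb N$. $\mu_a=1-(a\log_2 e)/2$, $\sigma_a^2=1-(a\log_2 e)/4$, and $\Phi$ is the standard Gaussian distribution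 function. *)

theory Defs
  imports "HOL-Probability.Probability"
begin

text \<open>Law of |S_n(1)|: the sum of independent Bernoulli(2/i) variables, 2 <= i <= n
  (as stated in the context for Kingman's n-coalescent).\<close>
fun S_size_dist :: "nat \<Rightarrow> nat pmf" where
  "S_size_dist 0 = return_pmf 0"
| "S_size_dist (Suc n) =
     (if Suc n < 2 then return_pmf 0
      else bind_pmf (S_size_dist n) (\<lambda>s.
             map_pmf (\<lambda>b. s + (if b then 1 else 0)) (bernoulli_pmf (2 / real (Suc n)))))"

definition Gtilde :: "int \<Rightarrow> real \<Rightarrow> nat \<Rightarrow> real" where
  "Gtilde d l t =
     (if int t \<ge> d
      then measure_pmf.prob (binomial_pmf (nat (int t - d)) (1/2)) {k. real k < l}
      else 0)"

definition mu_a :: "real \<Rightarrow> real" where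
  "mu_a a = 1 - (a * log 2 (exp 1)) / 2"

definition sigma2_a :: "real \<Rightarrow> real" where
  "sigma2_a a = 1 - (a * log 2 (exp 1)) / 4"

definition std_normal :: "real measure" where
  "std_normal = density lborel std_normal_density"

definition Phi :: "real \<Rightarrow> real" where
  "Phi z = measure std_normal {..z}"

end

theory Submission
  imports Defs "HOL-Real_Asymp.Real_Asymp"
begin

text \<open>
  Since \<open>m \<le> log\<^sub>2 n + O(1)\<close> while \<open>|S_n(1)|\<close> is of order \<open>2 ln n\<close>, a Chernoff
  bound shows \<open>P(|S_n(1)| < m) \<rightarrow> 0\<close>, so the expectation is asymptotically the distribution
  function of the binomial mixture \<open>Bin(|S_n(1)| - m, 1/2)\<close>. After centring at \<open>\<mu>\<^sub>a ln n\<close> and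
  scaling by \<open>\<sigma>\<^sub>a \<surd>(ln n)\<close>, its characteristic function is explicit, because the generating
  function of \<open>|S_n(1)|\<close> is \<open>\<Prod>\<^sub>i (1 - 2/i + 2z/i)\<close>; comparing the product with an exponential
  and expanding shows that it tends to \<open>exp (-t\<^sup>2/2)\<close>, and Levy's continuity theorem gives the
  limit \<open>\<Phi>(x)\<close>. The right-hand side is also \<open>\<Phi>(x)\<close>: it is \<open>P(N' + \<surd>\<mu>\<^sub>a N \<le> \<surd>(2\<sigma>\<^sub>a\<^sup>2) x)\<close>
  for independent standard Gaussians, and \<open>1 + \<mu>\<^sub>a = 2\<sigma>\<^sub>a\<^sup>2\<close>.
\<close>

section \<open>The law of the merger count\<close>

lemma set_pmf_S_size_dist: "set_pmf (S_size_dist n) \<subseteq> {..n}"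
  by (induction n) (auto split: if_splits)

lemma finite_set_pmf_S_size_dist: "finite (set_pmf (S_size_dist n))"
  using set_pmf_S_size_dist finite_subset by blast

lemma integrable_S_size_dist [simp]:
  fixes f :: "nat \<Rightarrow> 'b::{banach, second_countable_topology}"
  shows "integrable (measure_pmf (S_size_dist n)) f"
  by (rule integrable_measure_pmf_finite[OF finite_set_pmf_S_size_dist])

lemma expectation_bernoulli_pmf:
  fixes f :: "bool \<Rightarrow> 'b::{banach, second_countable_topology}"
  assumes "0 \<le> p" "p \<le> 1"
  shows "measure_pmf.expectation (bernoulli_pmf p) f = p *\<^sub>R f True + (1 - p) *\<^sub>R f False"
  using assms by (subst integral_measure_pmf[of UNIV]) (auto simp: UNIV_bool)

lemma generating_function_S_size_dist:
  fixes z :: "'a::{real_normed_field, banach, second_countable_topology}"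
  shows "measure_pmf.expectation (S_size_dist n) (\<lambda>s. z ^ s) =
           (\<Prod>i=2..n. 1 - of_real (2 / real i) + of_real (2 / real i) * z)"
proof (induction n)
  case (Suc n)
  show ?case
  proof (cases "n = 0")
    case False
    define p where "p = 2 / real (Suc n)"
    have p: "0 \<le> p" "p \<le> 1"
      using False by (auto simp: p_def field_simps)
    have "measure_pmf.expectation (S_size_dist (Suc n)) (\<lambda>s. z ^ s) =
        (\<Sum>s\<in>{..n}. pmf (S_size_dist n) s *\<^sub>R
           measure_pmf.expectation (bernoulli_pmf p) (\<lambda>b. z ^ (s + (if b then 1 else 0))))"
      using False set_pmf_S_size_dist[of n]
      by (simp add: p_def pmf_expectation_bind[where A = "{..n}"])
    also have "\<dots> = (\<Sum>s\<in>{..n}. pmf (S_size_dist n) s *\<^sub>R ((1 - of_real p + of_real p * z) * z ^ s))"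
      using p by (simp add: expectation_bernoulli_pmf scaleR_conv_of_real algebra_simps)
    also have "\<dots> = (1 - of_real p + of_real p * z) * measure_pmf.expectation (S_size_dist n) (\<lambda>s. z ^ s)"
      using set_pmf_S_size_dist[of n]
      by (subst integral_measure_pmf[of "{..n}"]) (auto simp: sum_distrib_left algebra_simps)
    finally show ?thesis
      using Suc False by (simp add: p_def prod.nat_ivl_Suc' mult.commute)
  qed simp
qed simp

lemma sum_inverse_atLeast_2: "n \<ge> 1 \<Longrightarrow> (\<Sum>i=2..n. 1 / real i) = harm n - 1"
  using sum.atLeast_Suc_atMost[of "Suc 0" n "\<lambda>i. 1 / real i"]
  by (simp add: harm_def inverse_eq_divide numeral_2_eq_2)

lemma sum_inverse_squares_atLeast_2: "n \<ge> 1 \<Longrightarrow> (\<Sum>i=2..n. 1 / real i ^ 2) \<le> 1 - 1 / real n"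
proof (induction n rule: dec_induct)
  case (step k)
  have "1 / real (Suc k) ^ 2 \<le> 1 / (real k * real (Suc k))"
    using step(1) by (intro divide_left_mono) (auto simp: power2_eq_square)
  also have "\<dots> = 1 / real k - 1 / real (Suc k)"
    using step(1) by (simp add: field_simps)
  finally show ?case
    using step by simp
qed simp

text \<open>A Chernoff bound, evaluating the generating function at \<open>3/4\<close>.\<close>

lemma prob_S_size_dist_less:
  assumes "n \<ge> 1"
  shows "measure_pmf.prob (S_size_dist n) {s. s < k} \<le> (4/3) ^ k * exp (- (harm n - 1) / 2)"
proof -
  have indicator_le: "indicator {s. s < k} s \<le> (4/3::real) ^ k * (3/4) ^ s" for s
  proof (cases "s < k")
    case True
    have "1 = (4/3::real) ^ k * (3/4) ^ k"
      by (simp add: power_mult_distrib[symmetric])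
    also have "\<dots> \<le> (4/3) ^ k * (3/4) ^ s"
      using True by (intro mult_left_mono power_decreasing) auto
    finally show ?thesis
      using True by simp
  qed simp
  have "measure_pmf.prob (S_size_dist n) {s. s < k} =
      measure_pmf.expectation (S_size_dist n) (indicator {s. s < k})"
    by simp
  also have "\<dots> \<le> measure_pmf.expectation (S_size_dist n) (\<lambda>s. (4/3::real) ^ k * (3/4) ^ s)"
    by (intro integral_mono indicator_le) auto
  also have "\<dots> = (4/3) ^ k * measure_pmf.expectation (S_size_dist n) (\<lambda>s. (3/4::real) ^ s)"
    by simp
  also have "measure_pmf.expectation (S_size_dist n) (\<lambda>s. (3/4::real) ^ s) =
      (\<Prod>i=2..n. 1 - 1 / (2 * real i))"
    unfolding generating_function_S_size_dist by (intro prod.cong refl) (simp add: field_simps)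
  also have "(\<Prod>i=2..n. 1 - 1 / (2 * real i)) \<le> (\<Prod>i=2..n. exp (- (1 / (2 * real i))))"
  proof (intro prod_mono conjI)
    fix i assume "i \<in> {2..n}"
    then show "0 \<le> 1 - 1 / (2 * real i)"
      by (simp add: field_simps)
    show "1 - 1 / (2 * real i) \<le> exp (- (1 / (2 * real i)))"
      using exp_ge_add_one_self[of "- (1 / (2 * real i))"] by simp
  qed
  also have "\<dots> = exp (- (\<Sum>i=2..n. 1 / real i) / 2)"
    by (simp add: exp_sum[symmetric] sum_negf sum_divide_distrib mult.commute)
  also have "\<dots> = exp (- (harm n - 1) / 2)"
    using sum_inverse_atLeast_2[OF assms] by simp
  finally show ?thesis
    by (simp add: mult_left_mono)
qed

lemma prob_S_size_dist_less_le_powr: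
  assumes "n \<ge> 1" "real k \<le> log 2 (real n) + B"
  shows "measure_pmf.prob (S_size_dist n) {s. s < k}
           \<le> exp (ln (4/3) * B + 1/2) * real n powr (ln (4/3) / ln 2 - 1/2)"
proof -
  have "(4/3::real) ^ k = exp (real k * ln (4/3))"
    by (subst exp_of_nat_mult) simp
  also have "\<dots> \<le> exp ((log 2 (real n) + B) * ln (4/3))"
    using assms(2) by (intro exp_le_cancel_iff[THEN iffD2] mult_right_mono) auto
  finally have "(4/3::real) ^ k \<le> exp ((log 2 (real n) + B) * ln (4/3))" .
  moreover have "exp (- (harm n - 1) / 2) \<le> exp (- (ln (real n) - 1) / 2)"
  proof -
    have "ln (real n) \<le> ln (real n + 1)"
      using assms(1) by simp
    then show ?thesis
      using harm_ge_ln[of n] by simp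
  qed
  ultimately have "(4/3::real) ^ k * exp (- (harm n - 1) / 2) \<le>
      exp ((log 2 (real n) + B) * ln (4/3)) * exp (- (ln (real n) - 1) / 2)"
    by (intro mult_mono) auto
  also have "\<dots> = exp (ln (4/3) * B + 1/2) * real n powr (ln (4/3) / ln 2 - 1/2)"
    using assms(1) by (simp add: powr_def mult_exp_exp log_def field_simps)
  finally show ?thesis
    using prob_S_size_dist_less[OF assms(1), of k] by linarith
qed

lemma prob_S_size_dist_less_log_tendsto_zero:
  fixes a :: real and b :: int
  assumes "a \<le> 1"
  shows "(\<lambda>n. measure_pmf.prob (S_size_dist n) {s. s < nat (\<lfloor>a * log 2 (real n)\<rfloor> + b)}) \<longlonglongrightarrow> 0"
proof (rule Lim_null_comparison)
  have "ln ((4/3::real) ^ 2) < ln 2"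
    by (simp add: power2_eq_square)
  then have "2 * ln (4/3::real) < ln 2"
    by (simp add: ln_realpow)
  then have "ln (4/3) / ln 2 - 1/2 < (0::real)"
    by (simp add: field_simps)
  then show "(\<lambda>n. exp (ln (4/3) * \<bar>b\<bar> + 1/2) * real n powr (ln (4/3) / ln 2 - 1/2)) \<longlonglongrightarrow> 0"
    by (intro tendsto_mult_right_zero tendsto_neg_powr filterlim_real_sequentially)
  show "\<forall>\<^sub>F n in sequentially. norm (measure_pmf.prob (S_size_dist n) {s. s < nat (\<lfloor>a * log 2 (real n)\<rfloor> + b)})
      \<le> exp (ln (4/3) * \<bar>b\<bar> + 1/2) * real n powr (ln (4/3) / ln 2 - 1/2)"
    using eventually_ge_at_top[of 1]
  proof eventually_elim
    case (elim n)
    have "a * log 2 (real n) \<le> log 2 (real n)"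
      using mult_right_mono[OF assms, of "log 2 (real n)"] elim by simp
    then have "real (nat (\<lfloor>a * log 2 (real n)\<rfloor> + b)) \<le> log 2 (real n) + \<bar>b\<bar>"
      using elim by (cases "\<lfloor>a * log 2 (real n)\<rfloor> + b \<ge> 0") (auto, linarith)
    then show ?case
      using prob_S_size_dist_less_le_powr[OF elim] by simp
  qed
qed

section \<open>Binomial mixtures\<close>

text \<open>For \<open>s < d\<close> the truncated subtraction gives \<open>Bin(0, 1/2)\<close>, whereas \<open>Gtilde (int d) l s = 0\<close>;
  the discrepancy is controlled by \<open>P(S < d)\<close>.\<close>

definition binomial_mixture :: "nat pmf \<Rightarrow> nat \<Rightarrow> nat pmf" where
  "binomial_mixture S d = bind_pmf S (\<lambda>s. binomial_pmf (s - d) (1/2))"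

lemma expectation_binomial_mixture:
  fixes h :: "nat \<Rightarrow> 'b::{banach, second_countable_topology}"
  assumes "finite (set_pmf S)"
  shows "measure_pmf.expectation (binomial_mixture S d) h =
           measure_pmf.expectation S (\<lambda>s. measure_pmf.expectation (binomial_pmf (s - d) (1/2)) h)"
  using assms unfolding binomial_mixture_def
  by (simp add: pmf_expectation_bind[of "set_pmf S"] integral_measure_pmf[of "set_pmf S"])

lemma generating_function_binomial_half:
  fixes z :: "'a::{real_normed_field, banach, second_countable_topology}"
  shows "measure_pmf.expectation (binomial_pmf N (1/2)) (\<lambda>k. z ^ k) = ((1 + z) / 2) ^ N"
proof -
  have "measure_pmf.expectation (binomial_pmf N (1/2)) (\<lambda>k. z ^ k)
      = (\<Sum>k\<le>N. pmf (binomial_pmf N (1/2)) k *\<^sub>R z ^ k)"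
    by (rule integral_measure_pmf) auto
  also have "\<dots> = (\<Sum>k\<le>N. of_nat (N choose k) * z ^ k * 1 ^ (N - k)) / 2 ^ N"
    by (simp add: sum_divide_distrib scaleR_conv_of_real power_add[symmetric] field_simps)
  also have "\<dots> = ((1 + z) / 2) ^ N"
    by (subst binomial_ring[symmetric]) (simp add: power_divide add.commute atLeast0AtMost)
  finally show ?thesis .
qed

lemma generating_function_binomial_mixture:
  fixes z :: "'a::{real_normed_field, banach, second_countable_topology}"
  assumes "finite (set_pmf S)"
  shows "measure_pmf.expectation (binomial_mixture S d) (\<lambda>k. z ^ k) =
           measure_pmf.expectation S (\<lambda>s. ((1 + z) / 2) ^ (s - d))"
  using assms by (simp add: expectation_binomial_mixture generating_function_binomial_half)

lemma expectation_Gtilde_approx_binomial_mixture: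
  assumes "finite (set_pmf S)"
  shows "\<bar>measure_pmf.expectation S (Gtilde (int d) l) -
           measure_pmf.prob (binomial_mixture S d) {k. real k < l}\<bar>
         \<le> measure_pmf.prob S {s. s < d}"
proof -
  define P where "P s = measure_pmf.prob (binomial_pmf (s - d) (1/2)) {k. real k < l}" for s
  have integrable: "integrable (measure_pmf S) f" for f :: "nat \<Rightarrow> real"
    using assms by (rule integrable_measure_pmf_finite)
  have "measure_pmf.prob (binomial_mixture S d) {k. real k < l} = measure_pmf.expectation S P"
    using expectation_binomial_mixture[OF assms, of d "indicator {k. real k < l} :: nat \<Rightarrow> real"]
    by (simp add: P_def[abs_def])
  then have "\<bar>measure_pmf.expectation S (Gtilde (int d) l) -
           measure_pmf.prob (binomial_mixture S d) {k. real k < l}\<bar>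
      = \<bar>measure_pmf.expectation S (\<lambda>s. Gtilde (int d) l s - P s)\<bar>"
    by (simp add: integrable)
  also have "\<dots> \<le> measure_pmf.expectation S (\<lambda>s. \<bar>Gtilde (int d) l s - P s\<bar>)"
    by (rule integral_abs_bound)
  also have "\<dots> \<le> measure_pmf.expectation S (indicator {s. s < d})"
  proof (intro integral_mono integrable)
    fix s
    show "\<bar>Gtilde (int d) l s - P s\<bar> \<le> indicator {s. s < d} s"
      by (cases "d \<le> s") (auto simp: Gtilde_def P_def nat_diff_distrib)
  qed
  finally show ?thesis
    by simp
qed

lemma norm_generating_function_shift_diff_le:
  fixes w :: complex
  assumes "finite (set_pmf S)" "norm w \<le> 1" "w \<noteq> 0"
  shows "norm (measure_pmf.expectation S (\<lambda>s. w ^ (s - d)) - measure_pmf.expectation S (\<lambda>s. w ^ s) / w ^ d)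
         \<le> (1 + 1 / norm w ^ d) * measure_pmf.prob S {s. s < d}"
proof -
  have integrable: "integrable (measure_pmf S) f" for f :: "nat \<Rightarrow> 'b::{banach, second_countable_topology}"
    using assms(1) by (rule integrable_measure_pmf_finite)
  have pointwise: "norm (w ^ (s - d) - w ^ s / w ^ d) \<le> (1 + 1 / norm w ^ d) * indicator {s. s < d} s" for s
  proof (cases "d \<le> s")
    case False
    have "norm (w ^ (s - d) - w ^ s / w ^ d) \<le> norm (1::complex) + norm w ^ s / norm w ^ d"
      using False norm_triangle_ineq4[of 1 "w ^ s / w ^ d"] by (simp add: norm_divide norm_power)
    also have "norm w ^ s / norm w ^ d \<le> 1 / norm w ^ d"
      using assms(2,3) by (intro divide_right_mono power_le_one) auto
    finally show ?thesis
      using False by simp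
  qed (use assms(3) in \<open>simp add: power_diff\<close>)
  have "norm (measure_pmf.expectation S (\<lambda>s. w ^ (s - d)) - measure_pmf.expectation S (\<lambda>s. w ^ s) / w ^ d)
      = norm (measure_pmf.expectation S (\<lambda>s. w ^ (s - d) - w ^ s / w ^ d))"
    by (simp add: integrable)
  also have "\<dots> \<le> measure_pmf.expectation S (\<lambda>s. norm (w ^ (s - d) - w ^ s / w ^ d))"
    by (rule integral_norm_bound)
  also have "\<dots> \<le> measure_pmf.expectation S (\<lambda>s. (1 + 1 / norm w ^ d) * indicator {s. s < d} s)"
    by (intro integral_mono integrable pointwise)
  finally show ?thesis
    by simp
qed

section \<open>Asymptotics of the characteristic function\<close>

lemma norm_exp_minus_one_minus_le:
  fixes z :: "'a::{real_normed_field, banach}"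
  assumes "norm z \<le> 1"
  shows "norm (exp z - 1 - z) \<le> norm z ^ 2"
proof -
  have summable: "summable (\<lambda>n. norm (inverse (fact (n + 2)) *\<^sub>R z ^ (n + 2)))"
    using summable_norm_exp[of z] by (subst summable_iff_shift[where k=2]) (simp add: scaleR_conv_of_real)
  have "norm (exp z - 1 - z) = norm (\<Sum>n. inverse (fact (n + 2)) *\<^sub>R z ^ (n + 2))"
    using exp_first_two_terms[of z] by simp
  also have "\<dots> \<le> (\<Sum>n. norm (inverse (fact (n + 2)) *\<^sub>R z ^ (n + 2)))"
    by (rule summable_norm[OF summable])
  also have "\<dots> = (\<Sum>n. inverse (fact (n + 2)) *\<^sub>R norm z ^ (n + 2))"
    by (simp only: norm_scaleR norm_power) simp
  also have "\<dots> = exp (norm z) - 1 - norm z"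
    using exp_first_two_terms[of "norm z"] by simp
  also have "\<dots> \<le> norm z ^ 2"
    using exp_bound[of "norm z"] assms by simp
  finally show ?thesis .
qed

lemma norm_prod_one_minus_minus_exp_le:
  fixes x :: "'i \<Rightarrow> complex"
  assumes "finite I" and "\<And>i. i \<in> I \<Longrightarrow> norm (1 - x i) \<le> 1" "\<And>i. i \<in> I \<Longrightarrow> Re (x i) \<ge> 0"
    and "\<And>i. i \<in> I \<Longrightarrow> norm (x i) \<le> 1"
  shows "norm ((\<Prod>i\<in>I. 1 - x i) - exp (- (\<Sum>i\<in>I. x i))) \<le> (\<Sum>i\<in>I. norm (x i) ^ 2)"
proof -
  have "norm ((\<Prod>i\<in>I. 1 - x i) - (\<Prod>i\<in>I. exp (- x i))) \<le> (\<Sum>i\<in>I. norm ((1 - x i) - exp (- x i)))"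
    using assms(2,3) by (intro norm_prod_diff) auto
  also have "\<dots> \<le> (\<Sum>i\<in>I. norm (x i) ^ 2)"
  proof (intro sum_mono)
    fix i assume "i \<in> I"
    then have "norm (exp (- x i) - 1 - (- x i)) \<le> norm (- x i) ^ 2"
      using assms(4) by (intro norm_exp_minus_one_minus_le) auto
    then show "norm ((1 - x i) - exp (- x i)) \<le> norm (x i) ^ 2"
      by (simp add: norm_minus_commute algebra_simps)
  qed
  finally show ?thesis
    using assms(1) by (simp add: exp_sum[symmetric] sum_negf)
qed

lemma norm_one_minus_iexp_le: "norm (1 - iexp u) \<le> \<bar>u\<bar>"
  using iexp_approx1[of u 0] by (simp add: norm_minus_commute)

lemma norm_one_minus_div_one_minus_iexp_le:
  assumes "i \<ge> 1"
  shows "norm (1 - (1 - iexp u) / of_nat i) \<le> 1"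
proof -
  have "1 - (1 - iexp u) / of_nat i = complex_of_real (1 - 1 / real i) + iexp u / of_nat i"
    using assms by (simp add: field_simps)
  also have "norm \<dots> \<le> norm (complex_of_real (1 - 1 / real i)) + norm (iexp u / of_nat i)"
    by (rule norm_triangle_ineq)
  also have "\<dots> = (1 - 1 / real i) + 1 / real i"
    using assms by (simp only: norm_of_real norm_divide norm_exp_i_times) simp
  finally show ?thesis
    by simp
qed

lemma norm_generating_function_S_size_dist_minus_exp_le:
  assumes "n \<ge> 1"
  shows "norm (measure_pmf.expectation (S_size_dist n) (\<lambda>s. ((1 + iexp u) / 2) ^ s)
                - exp (- ((1 - iexp u) * complex_of_real (harm n - 1)))) \<le> u ^ 2"
proof -
  define z where "z = 1 - iexp u"
  have norm_z: "norm z \<le> 2"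
    using norm_triangle_ineq4[of 1 "iexp u"] by (simp add: z_def)
  have "measure_pmf.expectation (S_size_dist n) (\<lambda>s. ((1 + iexp u) / 2) ^ s) =
      (\<Prod>i=2..n. 1 - z / of_nat i)"
    unfolding generating_function_S_size_dist by (intro prod.cong refl) (simp add: z_def field_simps)
  moreover have "(1 - iexp u) * complex_of_real (harm n - 1) = (\<Sum>i=2..n. z / of_nat i)"
    unfolding sum_inverse_atLeast_2[OF assms, symmetric]
    by (simp add: z_def of_real_sum sum_distrib_left divide_inverse)
  moreover have "norm ((\<Prod>i=2..n. 1 - z / of_nat i) - exp (- (\<Sum>i=2..n. z / of_nat i)))
      \<le> (\<Sum>i=2..n. norm (z / of_nat i) ^ 2)"
  proof (rule norm_prod_one_minus_minus_exp_le)
    show "finite {2..n}"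
      by simp
    fix i assume i: "i \<in> {2..n}"
    then show "norm (1 - z / of_nat i) \<le> 1"
      unfolding z_def by (intro norm_one_minus_div_one_minus_iexp_le) simp
    show "Re (z / of_nat i) \<ge> 0"
      using i by (simp add: z_def Re_exp)
    show "norm (z / of_nat i) \<le> 1"
      using i norm_z by (simp add: norm_divide field_simps)
  qed
  moreover have "(\<Sum>i=2..n. norm (z / of_nat i) ^ 2) = norm z ^ 2 * (\<Sum>i=2..n. 1 / real i ^ 2)"
    by (simp add: sum_distrib_left norm_divide power_divide)
  moreover have "\<dots> \<le> u ^ 2"
  proof -
    have "(\<Sum>i=2..n. 1 / real i ^ 2) \<le> 1"
      by (rule order_trans[OF sum_inverse_squares_atLeast_2[OF assms]]) simp
    moreover have "norm z ^ 2 \<le> u ^ 2"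
      using power_mono[OF norm_one_minus_iexp_le[of u], of 2] by (simp add: z_def)
    ultimately show ?thesis
      using mult_mono[of "norm z ^ 2" "u ^ 2" _ 1] by (simp add: sum_nonneg)
  qed
  ultimately show ?thesis
    by simp
qed

lemma half_one_plus_iexp: "(1 + iexp u) / 2 = iexp (u / 2) * complex_of_real (cos (u / 2))"
proof -
  define E where "E = iexp (u / 2)"
  define E' where "E' = iexp (- (u / 2))"
  have "complex_of_real (cos (u / 2)) = (E + E') / 2"
    by (simp add: E_def E'_def cos_of_real[symmetric] cos_exp_eq)
  then have "E * complex_of_real (cos (u / 2)) = (E * E + E * E') / 2"
    by (simp add: algebra_simps)
  moreover have "E * E = iexp u" "E * E' = 1"
    unfolding E_def E'_def by (subst mult_exp_exp; simp add: field_simps)+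
  ultimately show ?thesis
    by (simp add: E_def mult.commute)
qed

lemma half_one_plus_iexp_power:
  assumes "cos (u / 2) > 0"
  shows "((1 + iexp u) / 2) ^ m =
           exp (complex_of_real (real m * ln (cos (u / 2))) + \<i> * complex_of_real (u * real m / 2))"
proof -
  have "cos (u / 2) ^ m = exp (real m * ln (cos (u / 2)))"
    using assms by (subst exp_of_nat_mult) simp
  then have "complex_of_real (cos (u / 2)) ^ m = exp (complex_of_real (real m * ln (cos (u / 2))))"
    by (metis of_real_power exp_of_real)
  moreover have "iexp (u / 2) ^ m = iexp (u * real m / 2)"
    by (simp add: exp_of_nat_mult[symmetric] field_simps)
  ultimately show ?thesis
    by (simp add: half_one_plus_iexp power_mult_distrib mult_exp_exp add_ac)
qed

lemma exponential_form_approximant: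
  assumes "cos (u / 2) > 0"
  shows "iexp \<theta> * exp (- ((1 - iexp u) * complex_of_real h)) / ((1 + iexp u) / 2) ^ m =
           exp (complex_of_real (- ((1 - cos u) * h) - real m * ln (cos (u / 2))) +
                \<i> * complex_of_real (\<theta> + sin u * h - u * real m / 2))"
proof -
  have iexp: "1 - iexp u = complex_of_real (1 - cos u) - \<i> * complex_of_real (sin u)"
    by (simp add: exp_Euler cos_of_real sin_of_real algebra_simps)
  show ?thesis
    unfolding half_one_plus_iexp_power[OF assms]
    by (simp add: iexp exp_diff[symmetric] mult_exp_exp algebra_simps)
qed

lemma tendsto_mult_bounded_zero:
  fixes f g :: "'a \<Rightarrow> real"
  assumes "(f \<longlongrightarrow> 0) F" "eventually (\<lambda>x. \<bar>g x\<bar> \<le> B) F"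
  shows "((\<lambda>x. f x * g x) \<longlongrightarrow> 0) F"
proof (rule Lim_null_comparison)
  show "eventually (\<lambda>x. norm (f x * g x) \<le> \<bar>f x\<bar> * B) F"
    using assms(2) by eventually_elim (simp add: abs_mult mult_left_mono)
  show "((\<lambda>x. \<bar>f x\<bar> * B) \<longlongrightarrow> 0) F"
    using tendsto_mult_left_zero[OF tendsto_rabs_zero[OF assms(1)]] by simp
qed

lemma harm_minus_one_minus_ln_tendsto: "(\<lambda>n. harm n - 1 - ln (real n)) \<longlonglongrightarrow> euler_mascheroni - 1"
  using tendsto_diff[OF euler_mascheroni_LIMSEQ tendsto_const[of 1]] by (simp add: algebra_simps)

lemma one_minus_cos_mult_harm_tendsto:
  fixes c :: real
  defines "u \<equiv> \<lambda>n. c / sqrt (ln (real n))"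
  shows "(\<lambda>n. (1 - cos (u n)) * (harm n - 1)) \<longlonglongrightarrow> c^2 / 2"
proof -
  have "(\<lambda>n. ln (real n) * (1 - cos (u n))) \<longlonglongrightarrow> c^2 / 2"
    unfolding u_def power2_eq_square by real_asymp
  moreover have "(\<lambda>n. 1 - cos (u n)) \<longlonglongrightarrow> 0"
    unfolding u_def by real_asymp
  ultimately have "(\<lambda>n. ln (real n) * (1 - cos (u n)) + (1 - cos (u n)) * (harm n - 1 - ln (real n)))
      \<longlonglongrightarrow> c^2 / 2 + 0 * (euler_mascheroni - 1)"
    by (intro tendsto_add tendsto_mult harm_minus_one_minus_ln_tendsto)
  then show ?thesis
    by (simp add: algebra_simps)
qed

lemma mult_ln_cos_tendsto:
  fixes c \<kappa> B :: real and d :: "nat \<Rightarrow> nat"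
  assumes "eventually (\<lambda>n. \<bar>real (d n) - \<kappa> * ln (real n)\<bar> \<le> B) sequentially"
  defines "u \<equiv> \<lambda>n. c / sqrt (ln (real n))"
  shows "(\<lambda>n. real (d n) * ln (cos (u n / 2))) \<longlonglongrightarrow> - (\<kappa> * c^2 / 8)"
proof -
  have "(\<lambda>n. \<kappa> * (ln (real n) * ln (cos (u n / 2))) + ln (cos (u n / 2)) * (real (d n) - \<kappa> * ln (real n)))
      \<longlonglongrightarrow> \<kappa> * (- (c^2 / 8)) + 0"
  proof (intro tendsto_intros tendsto_mult_bounded_zero[OF _ assms(1)])
    show "(\<lambda>n. ln (real n) * ln (cos (u n / 2))) \<longlonglongrightarrow> - (c^2 / 8)"
      unfolding u_def power2_eq_square by real_asymp
    show "(\<lambda>n. ln (cos (u n / 2))) \<longlonglongrightarrow> 0"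
      unfolding u_def by real_asymp
  qed
  then show ?thesis
    by (simp add: algebra_simps)
qed

lemma sin_mult_harm_expansion:
  fixes c \<kappa> B :: real and d :: "nat \<Rightarrow> nat"
  assumes "eventually (\<lambda>n. \<bar>real (d n) - \<kappa> * ln (real n)\<bar> \<le> B) sequentially"
  defines "u \<equiv> \<lambda>n. c / sqrt (ln (real n))"
  shows "(\<lambda>n. sin (u n) * (harm n - 1) - u n * real (d n) / 2 - (1 - \<kappa> / 2) * c * sqrt (ln (real n)))
           \<longlonglongrightarrow> 0"
proof -
  define e where "e n = harm n - 1 - ln (real n)" for n
  have "(\<lambda>n. (ln (real n) * sin (u n) - c * sqrt (ln (real n)))
        + sin (u n) * e n - u n * (real (d n) - \<kappa> * ln (real n)) / 2
        - \<kappa> / 2 * (u n * ln (real n) - c * sqrt (ln (real n))))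
      \<longlonglongrightarrow> 0 + 0 * (euler_mascheroni - 1) - 0 / 2 - \<kappa> / 2 * 0"
  proof (intro tendsto_intros tendsto_mult_bounded_zero[OF _ assms(1)])
    show "e \<longlonglongrightarrow> euler_mascheroni - 1"
      unfolding e_def by (rule harm_minus_one_minus_ln_tendsto)
    show "(\<lambda>n. ln (real n) * sin (u n) - c * sqrt (ln (real n))) \<longlonglongrightarrow> 0"
      unfolding u_def by real_asymp
    show "(\<lambda>n. sin (u n)) \<longlonglongrightarrow> 0" "u \<longlonglongrightarrow> 0"
      unfolding u_def by real_asymp+
    show "(\<lambda>n. u n * ln (real n) - c * sqrt (ln (real n))) \<longlonglongrightarrow> 0"
      unfolding u_def by real_asymp
  qed simp
  then show ?thesis
    by (simp add: e_def diff_divide_distrib algebra_simps)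
qed

lemma inverse_norm_power_half_one_plus_iexp_tendsto:
  fixes c \<kappa> B :: real and d :: "nat \<Rightarrow> nat"
  assumes "eventually (\<lambda>n. \<bar>real (d n) - \<kappa> * ln (real n)\<bar> \<le> B) sequentially"
  defines "u \<equiv> \<lambda>n. c / sqrt (ln (real n))"
  shows "(\<lambda>n. 1 / norm ((1 + iexp (u n)) / 2) ^ d n) \<longlonglongrightarrow> exp (\<kappa> * c^2 / 8)"
proof -
  have "eventually (\<lambda>n. cos (u n / 2) > 0) sequentially"
    unfolding u_def by real_asymp
  then have "eventually (\<lambda>n. exp (- (real (d n) * ln (cos (u n / 2)))) = 1 / norm ((1 + iexp (u n)) / 2) ^ d n)
      sequentially"
  proof eventually_elim
    case (elim n)
    have "norm ((1 + iexp (u n)) / 2) = exp (ln (cos (u n / 2)))"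
      using elim by (simp add: half_one_plus_iexp norm_mult)
    then show ?case
      by (simp add: exp_of_nat_mult[symmetric] exp_minus inverse_eq_divide)
  qed
  moreover have "(\<lambda>n. exp (- (real (d n) * ln (cos (u n / 2))))) \<longlonglongrightarrow> exp (- (- (\<kappa> * c^2 / 8)))"
    unfolding u_def by (intro tendsto_intros mult_ln_cos_tendsto[OF assms(1)])
  ultimately show ?thesis
    by (simp add: tendsto_cong)
qed

text \<open>The generating function of \<open>S_size_dist n\<close> is close to \<open>exp (- (1 - iexp u) (harm n - 1))\<close>;
  this is the resulting main term, written as \<open>exp (ReE + i ImE)\<close>.\<close>

lemma approximant_tendsto:
  fixes t \<sigma> \<mu> \<kappa> B :: real and d :: "nat \<Rightarrow> nat"
  assumes "\<sigma> > 0" "\<mu> + \<kappa> / 2 = 1" "\<sigma>^2 = 1 - \<kappa> / 4"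
    and bound: "eventually (\<lambda>n. \<bar>real (d n) - \<kappa> * ln (real n)\<bar> \<le> B) sequentially"
  defines "u \<equiv> \<lambda>n. t / \<sigma> / sqrt (ln (real n))"
  shows "(\<lambda>n. iexp (- (t * \<mu> * sqrt (ln (real n)) / \<sigma>)) * exp (- ((1 - iexp (u n)) * complex_of_real (harm n - 1)))
              / ((1 + iexp (u n)) / 2) ^ d n)
           \<longlonglongrightarrow> complex_of_real (exp (- (t^2) / 2))"
proof -
  define ReE where "ReE n = - ((1 - cos (u n)) * (harm n - 1)) - real (d n) * ln (cos (u n / 2))" for n
  define ImE where "ImE n = - (t * \<mu> * sqrt (ln (real n)) / \<sigma>) + sin (u n) * (harm n - 1) - u n * real (d n) / 2"
    for n
  define c where "c = t / \<sigma>"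
  have "ReE \<longlonglongrightarrow> - (c^2 / 2) - (- (\<kappa> * c^2 / 8))"
    unfolding ReE_def[abs_def] u_def c_def
    by (intro tendsto_intros one_minus_cos_mult_harm_tendsto mult_ln_cos_tendsto[OF bound])
  also have "- (c^2 / 2) - (- (\<kappa> * c^2 / 8)) = - (c^2 * \<sigma>^2) / 2"
    by (simp add: assms(3) field_simps)
  also have "c^2 * \<sigma>^2 = t^2"
    using assms(1) by (simp add: c_def power_divide)
  finally have ReE: "ReE \<longlonglongrightarrow> - (t^2) / 2" .
  have \<mu>: "\<mu> = 1 - \<kappa> / 2"
    using assms(2) by simp
  have "ImE = (\<lambda>n. sin (u n) * (harm n - 1) - u n * real (d n) / 2 - (1 - \<kappa> / 2) * (t / \<sigma>) * sqrt (ln (real n)))"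
    unfolding ImE_def[abs_def] \<mu> by (simp add: field_simps)
  then have ImE: "ImE \<longlonglongrightarrow> 0"
    unfolding u_def by (simp only: sin_mult_harm_expansion[OF bound])
  have "(\<lambda>n. exp (complex_of_real (ReE n) + \<i> * complex_of_real (ImE n)))
      \<longlonglongrightarrow> exp (complex_of_real (- (t^2) / 2) + \<i> * complex_of_real 0)"
    by (intro tendsto_intros ReE ImE)
  moreover have "exp (complex_of_real (- (t^2) / 2) + \<i> * complex_of_real 0) = complex_of_real (exp (- (t^2) / 2))"
    by (simp only: of_real_0 mult_zero_right add_0_right exp_of_real)
  moreover have "eventually (\<lambda>n. cos (u n / 2) > 0) sequentially"
    unfolding u_def by real_asymp
  then have "eventually (\<lambda>n. exp (complex_of_real (ReE n) + \<i> * complex_of_real (ImE n)) =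
      iexp (- (t * \<mu> * sqrt (ln (real n)) / \<sigma>)) * exp (- ((1 - iexp (u n)) * complex_of_real (harm n - 1)))
        / ((1 + iexp (u n)) / 2) ^ d n) sequentially"
    by eventually_elim (simp only: exponential_form_approximant ReE_def ImE_def)
  ultimately show ?thesis
    by (simp add: tendsto_cong)
qed

lemma standardized_generating_function_S_size_dist_tendsto:
  fixes t \<sigma> \<mu> \<kappa> B :: real and d :: "nat \<Rightarrow> nat"
  assumes "\<sigma> > 0" "\<mu> + \<kappa> / 2 = 1" "\<sigma>^2 = 1 - \<kappa> / 4"
    and bound: "eventually (\<lambda>n. \<bar>real (d n) - \<kappa> * ln (real n)\<bar> \<le> B) sequentially"
  defines "w \<equiv> \<lambda>n. (1 + iexp (t / \<sigma> / sqrt (ln (real n)))) / 2"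
  shows "(\<lambda>n. iexp (- (t * \<mu> * sqrt (ln (real n)) / \<sigma>)) *
              measure_pmf.expectation (S_size_dist n) (\<lambda>s. w n ^ s) / w n ^ d n)
           \<longlonglongrightarrow> complex_of_real (exp (- (t^2) / 2))"
proof -
  define u where "u n = t / \<sigma> / sqrt (ln (real n))" for n
  define \<theta> where "\<theta> n = - (t * \<mu> * sqrt (ln (real n)) / \<sigma>)" for n
  define approx where "approx n = iexp (\<theta> n) * exp (- ((1 - iexp (u n)) * complex_of_real (harm n - 1))) / w n ^ d n"
    for n
  have w: "w n = (1 + iexp (u n)) / 2" for n
    by (simp add: w_def u_def)
  have "eventually (\<lambda>n. norm (iexp (\<theta> n) * measure_pmf.expectation (S_size_dist n) (\<lambda>s. w n ^ s) / w n ^ d n - approx n)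
      \<le> u n ^ 2 * (1 / norm (w n) ^ d n)) sequentially"
    using eventually_ge_at_top[of 1]
  proof eventually_elim
    case (elim n)
    have "norm (iexp (\<theta> n) * measure_pmf.expectation (S_size_dist n) (\<lambda>s. w n ^ s) / w n ^ d n - approx n)
        = norm (measure_pmf.expectation (S_size_dist n) (\<lambda>s. w n ^ s)
            - exp (- ((1 - iexp (u n)) * complex_of_real (harm n - 1)))) / norm (w n) ^ d n"
      by (simp add: approx_def norm_mult norm_divide norm_power flip: right_diff_distrib diff_divide_distrib)
    also have "\<dots> \<le> u n ^ 2 / norm (w n) ^ d n"
      unfolding w by (intro divide_right_mono norm_generating_function_S_size_dist_minus_exp_le elim) simp
    finally show ?case
      by simp
  qed
  moreover have "(\<lambda>n. u n ^ 2 * (1 / norm (w n) ^ d n)) \<longlonglongrightarrow> 0"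
  proof -
    have "(\<lambda>n. u n ^ 2) \<longlonglongrightarrow> 0"
      unfolding u_def power2_eq_square by real_asymp
    moreover have "(\<lambda>n. 1 / norm (w n) ^ d n) \<longlonglongrightarrow> exp (\<kappa> * (t / \<sigma>)^2 / 8)"
      unfolding w u_def by (rule inverse_norm_power_half_one_plus_iexp_tendsto[OF bound])
    ultimately show ?thesis
      using tendsto_mult by fastforce
  qed
  ultimately have "(\<lambda>n. iexp (\<theta> n) * measure_pmf.expectation (S_size_dist n) (\<lambda>s. w n ^ s) / w n ^ d n - approx n)
      \<longlonglongrightarrow> 0"
    by (rule Lim_null_comparison)
  moreover have "approx \<longlonglongrightarrow> complex_of_real (exp (- (t^2) / 2))"
    unfolding approx_def[abs_def] \<theta>_def w u_def by (rule approximant_tendsto[OF assms(1-3) bound])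
  ultimately show ?thesis
    using tendsto_add by (fastforce simp: \<theta>_def)
qed

section \<open>The central limit theorem for the binomial mixture\<close>

lemma real_distribution_distr_pmf: "real_distribution (distr (measure_pmf Q) borel (\<lambda>x::real. x))"
proof -
  interpret prob_space "distr (measure_pmf Q) borel (\<lambda>x::real. x)"
    by (rule measure_pmf.prob_space_distr) simp
  show ?thesis
    by unfold_locales simp
qed

lemma char_distr_pmf:
  "char (distr (measure_pmf Q) borel (\<lambda>x::real. x)) t = measure_pmf.expectation Q (\<lambda>x. iexp (t * x))"
  unfolding char_def by (subst integral_distr) auto

lemma emeasure_std_normal_singleton: "emeasure std_normal_distribution {x} = 0"
proof -
  have "AE y in lborel. y \<noteq> x"
    by (rule AE_I'[of "{x}"]) (auto simp: null_sets_def)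
  then have "AE y in lborel. y \<in> {x} \<longrightarrow> ennreal (std_normal_density y) = 0"
    by eventually_elim auto
  then have "{x} \<in> null_sets std_normal_distribution"
    by (subst null_sets_density_iff) auto
  then show ?thesis
    by auto
qed

lemma Phi_eq_measure_lessThan: "Phi x = measure std_normal_distribution {..<x}"
proof -
  interpret real_distribution std_normal_distribution
    by (rule real_dist_normal_dist)
  have "measure std_normal_distribution {..x} = measure std_normal_distribution ({..<x} \<union> {x})"
    by (simp add: ivl_disj_un(2)[symmetric])
  also have "\<dots> = measure std_normal_distribution {..<x}"
    using emeasure_std_normal_singleton[of x] by (subst measure_Un_null_set) auto
  finally show ?thesis
    by (simp add: Phi_def std_normal_def)
qed

lemma iexp_times_affine: "iexp (t * ((real k - a) / b)) = iexp (- (t * a / b)) * iexp (t / b) ^ k"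
proof -
  have "iexp (t * ((real k - a) / b)) = exp (\<i> * complex_of_real (- (t * a / b)) + of_nat k * (\<i> * complex_of_real (t / b)))"
    by (rule arg_cong[where f = exp]) (simp add: algebra_simps diff_divide_distrib)
  also have "\<dots> = iexp (- (t * a / b)) * exp (of_nat k * (\<i> * complex_of_real (t / b)))"
    by (rule exp_add)
  finally show ?thesis
    by (simp only: exp_of_nat_mult)
qed

lemma char_standardized_binomial_mixture:
  assumes "finite (set_pmf S)" "L > 0"
  shows "measure_pmf.expectation (map_pmf (\<lambda>k. (real k - \<mu> * L) / (\<sigma> * sqrt L)) (binomial_mixture S d))
            (\<lambda>x. iexp (t * x)) =
           iexp (- (t * \<mu> * sqrt L / \<sigma>)) *
             measure_pmf.expectation S (\<lambda>s. ((1 + iexp (t / \<sigma> / sqrt L)) / 2) ^ (s - d))"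
proof -
  have "t * (\<mu> * L) / (\<sigma> * sqrt L) = (t * \<mu> / \<sigma>) * (L / sqrt L)"
    by simp
  also have "L / sqrt L = sqrt L"
    using assms(2) by (simp add: real_div_sqrt)
  finally have shift: "t * (\<mu> * L) / (\<sigma> * sqrt L) = t * \<mu> * sqrt L / \<sigma>"
    by simp
  show ?thesis
    unfolding integral_map_pmf iexp_times_affine integral_mult_right_zero
      generating_function_binomial_mixture[OF assms(1)]
    by (simp only: shift divide_divide_eq_left)
qed

lemma char_standardized_binomial_mixture_S_size_dist_tendsto:
  fixes \<sigma> \<mu> \<kappa> B t :: real and d :: "nat \<Rightarrow> nat"
  assumes "\<sigma> > 0" "\<mu> + \<kappa> / 2 = 1" "\<sigma>^2 = 1 - \<kappa> / 4"
    and bound: "eventually (\<lambda>n. \<bar>real (d n) - \<kappa> * ln (real n)\<bar> \<le> B) sequentially"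
    and tail: "(\<lambda>n. measure_pmf.prob (S_size_dist n) {s. s < d n}) \<longlonglongrightarrow> 0"
  shows "(\<lambda>n. measure_pmf.expectation
            (map_pmf (\<lambda>k. (real k - \<mu> * ln (real n)) / (\<sigma> * sqrt (ln (real n))))
               (binomial_mixture (S_size_dist n) (d n))) (\<lambda>x. iexp (t * x)))
         \<longlonglongrightarrow> complex_of_real (exp (- (t^2) / 2))"
proof -
  define w where "w n = (1 + iexp (t / \<sigma> / sqrt (ln (real n)))) / 2" for n
  define \<theta> where "\<theta> n = - (t * \<mu> * sqrt (ln (real n)) / \<sigma>)" for n
  define main where "main n = iexp (\<theta> n) * measure_pmf.expectation (S_size_dist n) (\<lambda>s. w n ^ s) / w n ^ d n" for n
  have "(\<lambda>n. (t / \<sigma>) / sqrt (ln (real n))) \<longlonglongrightarrow> 0"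
    by real_asymp
  then have "w \<longlonglongrightarrow> (1 + iexp 0) / 2"
    unfolding w_def by (intro tendsto_intros) simp_all
  then have "eventually (\<lambda>n. w n \<noteq> 0) sequentially"
    by (rule tendsto_imp_eventually_ne) simp
  then have "eventually (\<lambda>n. norm (iexp (\<theta> n) * measure_pmf.expectation (S_size_dist n) (\<lambda>s. w n ^ (s - d n)) - main n)
      \<le> (1 + 1 / norm (w n) ^ d n) * measure_pmf.prob (S_size_dist n) {s. s < d n}) sequentially"
  proof eventually_elim
    case (elim n)
    have "norm (w n) \<le> 1"
      using norm_triangle_ineq[of 1 "iexp (t / \<sigma> / sqrt (ln (real n)))"] by (simp add: w_def norm_divide)
    then show ?case
      using norm_generating_function_shift_diff_le[OF finite_set_pmf_S_size_dist _ elim, of n "d n"]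
      by (simp add: main_def norm_mult flip: right_diff_distrib times_divide_eq_right)
  qed
  moreover have "(\<lambda>n. (1 + 1 / norm (w n) ^ d n) * measure_pmf.prob (S_size_dist n) {s. s < d n}) \<longlonglongrightarrow> 0"
    using tendsto_mult[OF tendsto_add[OF tendsto_const
        inverse_norm_power_half_one_plus_iexp_tendsto[OF bound, of "t / \<sigma>", folded w_def]] tail]
    by simp
  ultimately have "(\<lambda>n. iexp (\<theta> n) * measure_pmf.expectation (S_size_dist n) (\<lambda>s. w n ^ (s - d n)) - main n)
      \<longlonglongrightarrow> 0"
    by (rule Lim_null_comparison)
  from tendsto_add[OF this standardized_generating_function_S_size_dist_tendsto[OF assms(1-3) bound,
      of t, folded w_def \<theta>_def main_def]]
  have "(\<lambda>n. iexp (\<theta> n) * measure_pmf.expectation (S_size_dist n) (\<lambda>s. w n ^ (s - d n)))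
      \<longlonglongrightarrow> complex_of_real (exp (- (t^2) / 2))"
    by (simp add: main_def)
  moreover have "eventually (\<lambda>n. ln (real n) > 0) sequentially"
    by real_asymp
  then have "eventually (\<lambda>n. iexp (\<theta> n) * measure_pmf.expectation (S_size_dist n) (\<lambda>s. w n ^ (s - d n)) =
      measure_pmf.expectation (map_pmf (\<lambda>k. (real k - \<mu> * ln (real n)) / (\<sigma> * sqrt (ln (real n))))
        (binomial_mixture (S_size_dist n) (d n))) (\<lambda>x. iexp (t * x))) sequentially"
    by eventually_elim (simp only: \<theta>_def w_def char_standardized_binomial_mixture[OF finite_set_pmf_S_size_dist])
  ultimately show ?thesis
    by (rule Lim_transform_eventually)
qed

lemma prob_binomial_mixture_S_size_dist_tendsto_Phi:
  fixes \<sigma> \<mu> \<kappa> B x :: real and d :: "nat \<Rightarrow> nat"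
  assumes "\<sigma> > 0" "\<mu> + \<kappa> / 2 = 1" "\<sigma>^2 = 1 - \<kappa> / 4"
    and bound: "eventually (\<lambda>n. \<bar>real (d n) - \<kappa> * ln (real n)\<bar> \<le> B) sequentially"
    and tail: "(\<lambda>n. measure_pmf.prob (S_size_dist n) {s. s < d n}) \<longlonglongrightarrow> 0"
  shows "(\<lambda>n. measure_pmf.prob (binomial_mixture (S_size_dist n) (d n))
                 {k. real k < x * (\<sigma> * sqrt (ln (real n))) + \<mu> * ln (real n)}) \<longlonglongrightarrow> Phi x"
proof -
  define Q where "Q n = map_pmf (\<lambda>k. (real k - \<mu> * ln (real n)) / (\<sigma> * sqrt (ln (real n))))
    (binomial_mixture (S_size_dist n) (d n))" for n
  define M where "M n = distr (measure_pmf (Q n)) borel (\<lambda>x::real. x)" for n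
  have M: "real_distribution (M n)" for n
    by (simp add: M_def real_distribution_distr_pmf)
  have "(\<lambda>n. char (M n) t) \<longlonglongrightarrow> char std_normal_distribution t" for t
    using char_standardized_binomial_mixture_S_size_dist_tendsto[OF assms, of t]
    by (simp add: M_def Q_def char_distr_pmf char_std_normal_distribution)
  then have "weak_conv_m M std_normal_distribution"
    by (intro levy_continuity M real_dist_normal_dist)
  then have "(\<lambda>n. measure (M n) {..<x}) \<longlonglongrightarrow> measure std_normal_distribution {..<x}"
    by (intro weak_conv_imp_continuity_set_conv M real_dist_normal_dist)
       (simp_all add: emeasure_std_normal_singleton)
  moreover have "eventually (\<lambda>n. measure (M n) {..<x} = measure_pmf.prob (binomial_mixture (S_size_dist n) (d n))
                 {k. real k < x * (\<sigma> * sqrt (ln (real n))) + \<mu> * ln (real n)}) sequentially"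
    using eventually_gt_at_top[of 1]
  proof eventually_elim
    case (elim n)
    then have "{k. (real k - \<mu> * ln (real n)) / (\<sigma> * sqrt (ln (real n))) < x} =
        {k. real k < x * (\<sigma> * sqrt (ln (real n))) + \<mu> * ln (real n)}"
      using \<open>\<sigma> > 0\<close> by (auto simp: divide_less_eq algebra_simps)
    then show ?case
      by (simp add: M_def Q_def measure_distr vimage_def)
  qed
  ultimately show ?thesis
    by (simp add: Phi_eq_measure_lessThan tendsto_cong)
qed

section \<open>A Gaussian mixture of Gaussian distribution functions\<close>

lemma sets_std_normal [measurable_cong, simp]: "sets std_normal = sets borel"
  by (simp add: std_normal_def)

lemma space_std_normal [simp]: "space std_normal = UNIV"
  by (simp add: std_normal_def)

interpretation std_normal: prob_space std_normal
  unfolding std_normal_def by (rule prob_space_normal_density) simp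

interpretation std_normal_pair: pair_prob_space std_normal std_normal
  by unfold_locales

lemma distr_std_normal_pair_fst: "distr (std_normal \<Otimes>\<^sub>M std_normal) borel fst = std_normal"
proof -
  have "distr (std_normal \<Otimes>\<^sub>M std_normal) borel fst = distr (std_normal \<Otimes>\<^sub>M std_normal) std_normal fst"
    by (rule distr_cong) auto
  also have "\<dots> = std_normal"
    by (rule std_normal.distr_pair_fst)
  finally show ?thesis .
qed

lemma distr_std_normal_pair_snd: "distr (std_normal \<Otimes>\<^sub>M std_normal) borel snd = std_normal"
proof (rule measure_eqI)
  fix A assume A: "A \<in> sets (distr (std_normal \<Otimes>\<^sub>M std_normal) borel snd)"
  then have "A \<in> sets std_normal"
    by simp
  have "emeasure (distr (std_normal \<Otimes>\<^sub>M std_normal) borel snd) A =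
      emeasure (std_normal \<Otimes>\<^sub>M std_normal) (space std_normal \<times> A)"
    using A by (subst emeasure_distr) (auto simp: space_pair_measure intro!: arg_cong2[where f = emeasure])
  also have "\<dots> = emeasure std_normal A"
    using \<open>A \<in> sets std_normal\<close> std_normal.emeasure_space_1
    by (simp add: std_normal.emeasure_pair_measure_Times)
  finally show "emeasure (distr (std_normal \<Otimes>\<^sub>M std_normal) borel snd) A = emeasure std_normal A" .
qed simp

lemma indep_var_std_normal_pair_fst_snd:
  "prob_space.indep_var (std_normal \<Otimes>\<^sub>M std_normal) borel fst borel snd"
proof -
  have "distr (std_normal \<Otimes>\<^sub>M std_normal) (borel \<Otimes>\<^sub>M borel) (\<lambda>x. (fst x, snd x)) =
      std_normal \<Otimes>\<^sub>M std_normal"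
    unfolding prod.collapse by (rule distr_id2) (rule sets_pair_measure_cong; simp)
  moreover have "fst \<in> measurable (std_normal \<Otimes>\<^sub>M std_normal) borel"
    by measurable
  moreover have "snd \<in> measurable (std_normal \<Otimes>\<^sub>M std_normal) borel"
    by measurable
  ultimately show ?thesis
    by (simp only: std_normal_pair.P.indep_var_distribution_eq distr_std_normal_pair_fst
                   distr_std_normal_pair_snd)
qed

lemma distributed_std_normal_pair:
  "distributed (std_normal \<Otimes>\<^sub>M std_normal) lborel fst std_normal_density"
  "distributed (std_normal \<Otimes>\<^sub>M std_normal) lborel snd std_normal_density"
proof -
  have "distr (std_normal \<Otimes>\<^sub>M std_normal) lborel fst = std_normal"
    "distr (std_normal \<Otimes>\<^sub>M std_normal) lborel snd = std_normal"
    using distr_std_normal_pair_fst distr_std_normal_pair_snd by (metis distr_cong sets_lborel)+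
  then show "distributed (std_normal \<Otimes>\<^sub>M std_normal) lborel fst std_normal_density"
    "distributed (std_normal \<Otimes>\<^sub>M std_normal) lborel snd std_normal_density"
    unfolding distributed_def by (simp_all add: std_normal_def)
qed

lemma distr_std_normal_pair_normalized_sum:
  assumes "s > 0"
  shows "distr (std_normal \<Otimes>\<^sub>M std_normal) lborel (\<lambda>p. (fst p + s * snd p) / sqrt (1 + s^2)) = std_normal"
proof -
  define P where "P = std_normal \<Otimes>\<^sub>M std_normal"
  have "distributed P lborel (\<lambda>p. 0 + s * snd p) (normal_density (0 + s * 0) (\<bar>s\<bar> * 1))"
    using std_normal_pair.P.normal_density_affine[OF distributed_std_normal_pair(2), where \<alpha> = s and \<beta> = 0] assms
    by (simp add: P_def)
  moreover have "prob_space.indep_var P borel ((\<lambda>x. x) \<circ> fst) borel ((\<lambda>x. s * x) \<circ> snd)"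
    unfolding P_def by (rule std_normal_pair.P.indep_var_compose[OF indep_var_std_normal_pair_fst_snd]) auto
  ultimately have "distributed P lborel (\<lambda>p. fst p + s * snd p) (normal_density (0 + 0) (sqrt (1^2 + s^2)))"
    unfolding P_def using assms distributed_std_normal_pair(1)
    by (intro std_normal_pair.P.add_indep_normal) (auto simp: P_def o_def)
  then have "distributed P lborel (\<lambda>p. (fst p + s * snd p) / sqrt (1 + s^2)) std_normal_density"
    unfolding P_def using std_normal_pair.P.normal_standard_normal_convert[of "sqrt (1 + s^2)"]
    by (simp add: add_pos_nonneg)
  then show ?thesis
    by (simp add: P_def distributed_def std_normal_def)
qed

text \<open>With \<open>X, Y\<close> independent standard Gaussians, the integral is \<open>P(X + s Y \<le> c)\<close>.\<close>

lemma integral_std_normal_Phi: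
  fixes s c :: real
  assumes "s > 0"
  shows "integral\<^sup>L std_normal (\<lambda>y. Phi ((c - y) / s)) = Phi (c / sqrt (1 + s^2))"
proof -
  define P where "P = std_normal \<Otimes>\<^sub>M std_normal"
  define \<tau> where "\<tau> = sqrt (1 + s^2)"
  define V where "V p = (fst p + s * snd p) / \<tau>" for p :: "real \<times> real"
  define A where "A = {p. V p \<le> c / \<tau>}"
  have \<tau>: "\<tau> > 0"
    by (simp add: \<tau>_def add_pos_nonneg)
  have space_P: "space P = UNIV"
    by (simp add: P_def space_pair_measure)
  have V_measurable: "V \<in> measurable P lborel"
    unfolding P_def V_def by measurable
  have "A = {p \<in> space P. V p \<le> c / \<tau>}"
    by (simp add: A_def space_P)
  also have "\<dots> \<in> sets P"
    using V_measurable by measurable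
  finally have A_sets: "A \<in> sets P" .
  have "Phi ((c - y) / s) = (\<integral>z. indicator A (y, z) \<partial>std_normal)" for y
  proof -
    have "{..(c - y) / s} = {z. (y, z) \<in> A}"
      using assms \<tau> by (auto simp: A_def V_def divide_le_cancel pos_le_divide_eq algebra_simps)
    moreover have "(\<lambda>z. indicator A (y, z) :: real) = indicator {z. (y, z) \<in> A}"
      by (auto simp: indicator_def)
    ultimately show ?thesis
      by (simp add: Phi_def)
  qed
  then have "integral\<^sup>L std_normal (\<lambda>y. Phi ((c - y) / s)) = (\<integral>y. (\<integral>z. indicator A (y, z) \<partial>std_normal) \<partial>std_normal)"
    by simp
  also have "\<dots> = integral\<^sup>L P (indicator A)"
  proof -
    have "integrable P (indicator A :: real \<times> real \<Rightarrow> real)"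
      using A_sets unfolding P_def by (intro std_normal_pair.P.integrable_const_bound[where B = 1]) auto
    then show ?thesis
      unfolding P_def by (rule std_normal_pair.integral_fst')
  qed
  also have "\<dots> = measure (distr P lborel V) {..c / \<tau>}"
    using V_measurable by (simp add: measure_distr A_def space_P vimage_def)
  also have "distr P lborel V = std_normal"
    unfolding P_def V_def \<tau>_def by (rule distr_std_normal_pair_normalized_sum[OF assms])
  finally show ?thesis
    by (simp add: Phi_def \<tau>_def)
qed

lemma expectation_Gtilde_S_size_dist_tendsto_Phi:
  fixes \<sigma> \<mu> \<kappa> B x :: real and d :: "nat \<Rightarrow> nat"
  assumes "\<sigma> > 0" "\<mu> + \<kappa> / 2 = 1" "\<sigma>^2 = 1 - \<kappa> / 4"
    and "eventually (\<lambda>n. \<bar>real (d n) - \<kappa> * ln (real n)\<bar> \<le> B) sequentially"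
    and tail: "(\<lambda>n. measure_pmf.prob (S_size_dist n) {s. s < d n}) \<longlonglongrightarrow> 0"
  shows "(\<lambda>n. measure_pmf.expectation (S_size_dist n)
            (Gtilde (int (d n)) (x * (\<sigma> * sqrt (ln (real n))) + \<mu> * ln (real n)))) \<longlonglongrightarrow> Phi x"
proof -
  define l where "l n = x * (\<sigma> * sqrt (ln (real n))) + \<mu> * ln (real n)" for n
  have "(\<lambda>n. measure_pmf.expectation (S_size_dist n) (Gtilde (int (d n)) (l n))
      - measure_pmf.prob (binomial_mixture (S_size_dist n) (d n)) {k. real k < l n}) \<longlonglongrightarrow> 0"
  proof (rule Lim_null_comparison[OF _ tail], intro always_eventually allI)
    fix n
    show "norm (measure_pmf.expectation (S_size_dist n) (Gtilde (int (d n)) (l n))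
        - measure_pmf.prob (binomial_mixture (S_size_dist n) (d n)) {k. real k < l n})
        \<le> measure_pmf.prob (S_size_dist n) {s. s < d n}"
      using expectation_Gtilde_approx_binomial_mixture[OF finite_set_pmf_S_size_dist] by simp
  qed
  from tendsto_add[OF this prob_binomial_mixture_S_size_dist_tendsto_Phi[OF assms, of x]] show ?thesis
    by (simp add: l_def)
qed

lemma nat_floor_log_bound:
  fixes a :: real and b :: int
  assumes "eventually (\<lambda>n. \<lfloor>a * log 2 (real n)\<rfloor> + b \<ge> 0) sequentially"
  shows "eventually (\<lambda>n. \<bar>real (nat (\<lfloor>a * log 2 (real n)\<rfloor> + b)) - a / ln 2 * ln (real n)\<bar> \<le> \<bar>b\<bar> + 1) sequentially"
  using assms
proof eventually_elim
  case (elim n)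
  then have "real (nat (\<lfloor>a * log 2 (real n)\<rfloor> + b)) = real_of_int \<lfloor>a / ln 2 * ln (real n)\<rfloor> + b"
    by (simp add: log_def)
  then show ?case
    by linarith
qed

lemma mu_a_sigma2_a_eqs:
  shows "mu_a a + (a / ln 2) / 2 = 1" and "sigma2_a a = 1 - (a / ln 2) / 4"
    and "1 + mu_a a = 2 * sigma2_a a"
  by (simp_all add: mu_a_def sigma2_a_def log_def)

lemma mu_a_sigma2_a_pos:
  assumes "a \<le> 1"
  shows "mu_a a > 0" and "sigma2_a a > 0"
proof -
  have "a < 2 * ln 2"
    using assms ln2_ge_two_thirds by linarith
  moreover have "a < 4 * ln 2"
    using assms ln2_ge_two_thirds by linarith
  ultimately show "mu_a a > 0" "sigma2_a a > 0"
    by (simp_all add: mu_a_def sigma2_a_def log_def field_simps)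
qed

theorem lemma3p4:
  fixes a x :: real and b :: int
  assumes "0 \<le> a" "a \<le> 1"
  assumes "eventually (\<lambda>n::nat. \<lfloor>a * log 2 (real n)\<rfloor> + b \<ge> 0) sequentially"
  shows "(\<lambda>n::nat. measure_pmf.expectation (S_size_dist n)
            (\<lambda>t. Gtilde (\<lfloor>a * log 2 (real n)\<rfloor> + b)
                     (x * sqrt (sigma2_a a * ln (real n)) + mu_a a * ln (real n)) t))
         \<longlonglongrightarrow> integral\<^sup>L std_normal
               (\<lambda>y. Phi ((sqrt (2 * sigma2_a a) * x - y) / sqrt (mu_a a)))"
proof -
  define \<sigma> where "\<sigma> = sqrt (sigma2_a a)"
  note pos = mu_a_sigma2_a_pos[OF assms(2)] and eqs = mu_a_sigma2_a_eqs[of a]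
  have "\<sigma> > 0" "mu_a a + (a / ln 2) / 2 = 1" "\<sigma>^2 = 1 - (a / ln 2) / 4"
    using pos eqs by (simp_all add: \<sigma>_def)
  from expectation_Gtilde_S_size_dist_tendsto_Phi[OF this nat_floor_log_bound[OF assms(3)]
      prob_S_size_dist_less_log_tendsto_zero[OF assms(2)], of x]
  have "(\<lambda>n. measure_pmf.expectation (S_size_dist n) (Gtilde (\<lfloor>a * log 2 (real n)\<rfloor> + b)
      (x * sqrt (sigma2_a a * ln (real n)) + mu_a a * ln (real n)))) \<longlonglongrightarrow> Phi x"
    by (rule Lim_transform_eventually)
       (use assms(3) in \<open>eventually_elim, simp add: \<sigma>_def real_sqrt_mult\<close>)
  moreover have "integral\<^sup>L std_normal (\<lambda>y. Phi ((sqrt (2 * sigma2_a a) * x - y) / sqrt (mu_a a))) = Phi x"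
    using integral_std_normal_Phi[of "sqrt (mu_a a)" "sqrt (2 * sigma2_a a) * x"] pos eqs(3) by simp
  ultimately show ?thesis
    by simp
qed

end
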